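(* Let $\mathcal O[\lambda]$ be the algebra of polynomials in an indeterminate $\lambda$ (commuting with everything in $\mathcal O$) with coefficients in $\mathcal O$, and let $J$ be the 2-sided ideal of $\mathcal O[\lambda]$ generated by $(q-q^{-1})^2\xi_1\lambda+\xi_2$, where $\xi_1=XY-YX$ and $\xi_2=X^2Y^2-Y^2X^2+(q^2+q^{-2})(YXYX-XYXY)$. Then the $\mathbb F$-algebra $\Delta$ is isomorphic to $\mathcal O[\lambda]/J$ (via the map induced by $X\mapsto A$, $Y\mapsto B$, $\lambda\mapsto\gamma$).
   Context: Let $\mathbb F$ be a field and fix a nonzero $q\in\mathbb F$ with $q^4\neq 1$; $[3]_q=q^2+1+q^{-2}$. The universal Askey--Wilson algebra $\Delta$ is the associative $\mathbb F$-algebra with 1 with generators $A,B,C$ subject to the relations that each of $A+\frac{qBC-q^{-1}CB}{q^2-q^{-2}}$, $B+\frac{qCA-q^{-1}AC}{q^2-q^{-2}}$, $C+\frac{qAB-q^{-1}BA}{q^2-q^{-2}}$ is central; $\gamma$ denotes the third of these central elements multiplied by $q+q^{-1}$. The $q$-Onsager algebra $\mathcal O$ is the $\mathbb F$-algebra with generators $X,Y$ and relations $X^3Y-[3]_q X^2YX+[3]_q XYX^2-YX^3 = -(q^2-q^{-2})^2(XY-YX)$ and $Y^3X-[3]_q Y^2XY+[3]_q YXY^2-XY^3 = -(q^2-q^{-2})^2(YX-XY)$. *)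

theory Defs
  imports Main
begin

text \<open>An element of the free associative algebra over the field 'k on the
generator set 'g is a finitely supported function from words ('g list) to 'k
(the coefficient of each word).  Functions that are not finitely supported
are excluded by the predicate fpoly.\<close>

type_synonym ('g, 'k) fa = "'g list \<Rightarrow> 'k"

definition fpoly :: "('g, 'k::zero) fa \<Rightarrow> bool" where
  "fpoly p \<longleftrightarrow> finite {w. p w \<noteq> 0}"

definition fa_add :: "('g, 'k::field) fa \<Rightarrow> ('g, 'k) fa \<Rightarrow> ('g, 'k) fa" (infixl "\<oplus>" 65) where
  "p \<oplus> q = (\<lambda>w. p w + q w)"

definition fa_sub :: "('g, 'k::field) fa \<Rightarrow> ('g, 'k) fa \<Rightarrow> ('g, 'k) fa" (infixl "\<ominus>" 65) where
  "p \<ominus> q = (\<lambda>w. p w - q w)"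

definition fa_smul :: "'k::field \<Rightarrow> ('g, 'k) fa \<Rightarrow> ('g, 'k) fa" (infixr "\<cdot>" 75) where
  "c \<cdot> p = (\<lambda>w. c * p w)"

definition fa_mul :: "('g, 'k::field) fa \<Rightarrow> ('g, 'k) fa \<Rightarrow> ('g, 'k) fa" (infixl "\<otimes>" 70) where
  "p \<otimes> q = (\<lambda>w. \<Sum>i\<le>length w. p (take i w) * q (drop i w))"

definition fa_const :: "'k::field \<Rightarrow> ('g, 'k) fa" where
  "fa_const c = (\<lambda>w. if w = [] then c else 0)"

definition fa_gen :: "'g \<Rightarrow> ('g, 'k::field) fa" where
  "fa_gen g = (\<lambda>w. if w = [g] then 1 else 0)"

definition fa_comm :: "('g, 'k::field) fa \<Rightarrow> ('g, 'k) fa \<Rightarrow> ('g, 'k) fa" where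
  "fa_comm a b = a \<otimes> b \<ominus> b \<otimes> a"

inductive_set fa_ideal :: "('g, 'k::field) fa set \<Rightarrow> ('g, 'k) fa set" for R where
  zero: "(\<lambda>_. 0) \<in> fa_ideal R"
| gen: "r \<in> R \<Longrightarrow> r \<in> fa_ideal R"
| add: "a \<in> fa_ideal R \<Longrightarrow> b \<in> fa_ideal R \<Longrightarrow> a \<oplus> b \<in> fa_ideal R"
| lmul: "a \<in> fa_ideal R \<Longrightarrow> fpoly p \<Longrightarrow> p \<otimes> a \<in> fa_ideal R"
| rmul: "a \<in> fa_ideal R \<Longrightarrow> fpoly p \<Longrightarrow> a \<otimes> p \<in> fa_ideal R"

fun fa_word :: "('g \<Rightarrow> ('h, 'k::field) fa) \<Rightarrow> 'g list \<Rightarrow> ('h, 'k) fa" where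
  "fa_word \<phi> [] = fa_const 1"
| "fa_word \<phi> (g # w) = \<phi> g \<otimes> fa_word \<phi> w"

definition fa_hom :: "('g \<Rightarrow> ('h, 'k::field) fa) \<Rightarrow> ('g, 'k) fa \<Rightarrow> ('h, 'k) fa" where
  "fa_hom \<phi> p = (\<lambda>v. \<Sum>w\<in>{w. p w \<noteq> 0}. p w * fa_word \<phi> w v)"

datatype gD = GA | GB | GC

abbreviation "A \<equiv> (fa_gen GA :: (gD, 'k::field) fa)"
abbreviation "B \<equiv> (fa_gen GB :: (gD, 'k::field) fa)"
abbreviation "C \<equiv> (fa_gen GC :: (gD, 'k::field) fa)"

text \<open>The three elements required to be central.\<close>
definition omegaA :: "'k::field \<Rightarrow> (gD, 'k) fa" where
  "omegaA q = A \<oplus> inverse (q^2 - inverse q ^ 2) \<cdot> (q \<cdot> (B \<otimes> C) \<ominus> inverse q \<cdot> (C \<otimes> B))"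
definition omegaB :: "'k::field \<Rightarrow> (gD, 'k) fa" where
  "omegaB q = B \<oplus> inverse (q^2 - inverse q ^ 2) \<cdot> (q \<cdot> (C \<otimes> A) \<ominus> inverse q \<cdot> (A \<otimes> C))"
definition omegaC :: "'k::field \<Rightarrow> (gD, 'k) fa" where
  "omegaC q = C \<oplus> inverse (q^2 - inverse q ^ 2) \<cdot> (q \<cdot> (A \<otimes> B) \<ominus> inverse q \<cdot> (B \<otimes> A))"

definition gammaD :: "'k::field \<Rightarrow> (gD, 'k) fa" where
  "gammaD q = (q + inverse q) \<cdot> omegaC q"

definition rels_Delta :: "'k::field \<Rightarrow> (gD, 'k) fa set" where
  "rels_Delta q = {fa_comm (w q) (fa_gen g) | w g. w \<in> {omegaA, omegaB, omegaC}}"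

datatype gO = GX | GY | GL

abbreviation "X \<equiv> (fa_gen GX :: (gO, 'k::field) fa)"
abbreviation "Y \<equiv> (fa_gen GY :: (gO, 'k::field) fa)"
abbreviation "L \<equiv> (fa_gen GL :: (gO, 'k::field) fa)"

definition qbr3 :: "'k::field \<Rightarrow> 'k" where
  "qbr3 q = q^2 + 1 + inverse q ^ 2"

text \<open>q-Dolan--Grady relations, written as LHS - RHS.\<close>
definition relO1 :: "'k::field \<Rightarrow> (gO, 'k) fa" where
  "relO1 q = (X \<otimes> X \<otimes> X \<otimes> Y \<ominus> qbr3 q \<cdot> (X \<otimes> X \<otimes> Y \<otimes> X) \<oplus> qbr3 q \<cdot> (X \<otimes> Y \<otimes> X \<otimes> X)
     \<ominus> Y \<otimes> X \<otimes> X \<otimes> X) \<oplus> (q^2 - inverse q ^ 2)^2 \<cdot> (X \<otimes> Y \<ominus> Y \<otimes> X)"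
definition relO2 :: "'k::field \<Rightarrow> (gO, 'k) fa" where
  "relO2 q = (Y \<otimes> Y \<otimes> Y \<otimes> X \<ominus> qbr3 q \<cdot> (Y \<otimes> Y \<otimes> X \<otimes> Y) \<oplus> qbr3 q \<cdot> (Y \<otimes> X \<otimes> Y \<otimes> Y)
     \<ominus> X \<otimes> Y \<otimes> Y \<otimes> Y) \<oplus> (q^2 - inverse q ^ 2)^2 \<cdot> (Y \<otimes> X \<ominus> X \<otimes> Y)"

definition xi1 :: "(gO, 'k::field) fa" where
  "xi1 = X \<otimes> Y \<ominus> Y \<otimes> X"
definition xi2 :: "'k::field \<Rightarrow> (gO, 'k) fa" where
  "xi2 q = X \<otimes> X \<otimes> Y \<otimes> Y \<ominus> Y \<otimes> Y \<otimes> X \<otimes> X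
     \<oplus> (q^2 + inverse q ^ 2) \<cdot> (Y \<otimes> X \<otimes> Y \<otimes> X \<ominus> X \<otimes> Y \<otimes> X \<otimes> Y)"

definition Jgen :: "'k::field \<Rightarrow> (gO, 'k) fa" where
  "Jgen q = (q - inverse q)^2 \<cdot> (xi1 \<otimes> L) \<oplus> xi2 q"

text \<open>O[lambda]/J = free algebra on X,Y,lambda modulo: the O relations,
lambda commuting with X and Y, and the generator of J.\<close>
definition rels_OJ :: "'k::field \<Rightarrow> (gO, 'k) fa set" where
  "rels_OJ q = {relO1 q, relO2 q, fa_comm L X, fa_comm L Y, Jgen q}"

definition phi :: "'k::field \<Rightarrow> gO \<Rightarrow> (gD, 'k) fa" where
  "phi q g = (case g of GX \<Rightarrow> A | GY \<Rightarrow> B | GL \<Rightarrow> gammaD q)"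

end

theory Submission
  imports Defs
begin

text \<open>The inverse of the map induced by \<open>phi\<close> is induced by \<open>psi\<close>:
  A to X, B to Y and C to lambda/(q + q^-1) - (q XY - q^-1 YX)/(q^2 - q^-2), obtained by solving
  the definition of gamma for C. Both composites fix all generators already in the free algebras
  (psi(gamma) = lambda and phi(psi(C)) = C), so it only remains to see that each map sends the
  defining relations into the other ideal. On the side of O[lambda]/J, psi(omegaC) is a multiple of
  lambda, which is central, while the commutators of psi(omegaA) and psi(omegaB) with X and Y are
  explicit combinations of the q-Dolan--Grady relations, of the generator of J and of commutators
  with lambda. Conversely the images of the q-Dolan--Grady relations and of the generator of J are
  explicit combinations of commutators with the central elements of Delta.\<close>

section \<open>Term lists as normal forms\<close>

text \<open>An element of the free algebra is represented by a list of (coefficient, word) pairs whose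
  coefficients are summed per word. Products and scalar multiples are computed on the lists, so
  concrete identities can be decided by comparing finitely many coefficients.\<close>

abbreviation fa_zero :: "('g, 'k::field) fa" where
  "fa_zero \<equiv> (\<lambda>_. 0)"

definition fa_of_terms :: "('k::field \<times> 'g list) list \<Rightarrow> ('g, 'k) fa" where
  "fa_of_terms ts = (\<lambda>w. sum_list (map fst (filter (\<lambda>t. snd t = w) ts)))"

definition terms_mul :: "('k::field \<times> 'g list) list \<Rightarrow> ('k \<times> 'g list) list \<Rightarrow> ('k \<times> 'g list) list" where
  "terms_mul ts us = concat (map (\<lambda>(a, u). map (\<lambda>(b, v). (a * b, u @ v)) us) ts)"

definition terms_smult :: "'k::field \<Rightarrow> ('k \<times> 'g list) list \<Rightarrow> ('k \<times> 'g list) list" where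
  "terms_smult c ts = map (\<lambda>(a, u). (c * a, u)) ts"

lemma fa_of_terms_Nil: "fa_of_terms [] = fa_zero"
  by (simp add: fa_of_terms_def)

lemma fa_of_terms_append: "fa_of_terms (ts @ us) = fa_of_terms ts \<oplus> fa_of_terms us"
  by (simp add: fa_of_terms_def fa_add_def)

lemma fa_of_terms_Cons: "fa_of_terms (t # ts) = fa_of_terms [t] \<oplus> fa_of_terms ts"
  using fa_of_terms_append[of "[t]" ts] by simp

lemma fa_of_terms_single: "fa_of_terms [(a, u)] = (\<lambda>w. if u = w then a else 0)"
  by (simp add: fa_of_terms_def fun_eq_iff)

lemma fa_smul_terms: "c \<cdot> fa_of_terms ts = fa_of_terms (terms_smult c ts)"
  by (induction ts) (auto simp: fa_of_terms_def fa_smul_def terms_smult_def fun_eq_iff algebra_simps)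

lemma fa_sub_terms: "fa_of_terms ts \<ominus> fa_of_terms us = fa_of_terms (ts @ terms_smult (-1) us)"
  by (simp add: fa_of_terms_append fa_smul_terms[symmetric] fa_sub_def fa_add_def fa_smul_def)

lemma fa_mul_add_right: "p \<otimes> (a \<oplus> b) = p \<otimes> a \<oplus> p \<otimes> b"
  by (simp add: fa_mul_def fa_add_def fun_eq_iff distrib_left sum.distrib)

lemma fa_mul_add_left: "(a \<oplus> b) \<otimes> p = a \<otimes> p \<oplus> b \<otimes> p"
  by (simp add: fa_mul_def fa_add_def fun_eq_iff distrib_right sum.distrib)

lemma fa_mul_sub_right: "p \<otimes> (a \<ominus> b) = p \<otimes> a \<ominus> p \<otimes> b"
  by (simp add: fa_mul_def fa_sub_def fun_eq_iff right_diff_distrib sum_subtractf)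

lemma fa_mul_sub_left: "(a \<ominus> b) \<otimes> p = a \<otimes> p \<ominus> b \<otimes> p"
  by (simp add: fa_mul_def fa_sub_def fun_eq_iff left_diff_distrib sum_subtractf)

lemma fa_mul_zero_right: "p \<otimes> fa_zero = fa_zero"
  by (simp add: fa_mul_def)

lemma fa_mul_zero_left: "fa_zero \<otimes> p = fa_zero"
  by (simp add: fa_mul_def)

lemma fa_add_zero_left: "fa_zero \<oplus> p = p"
  by (simp add: fa_add_def)

lemma fa_add_zero_right: "p \<oplus> fa_zero = p"
  by (simp add: fa_add_def)

lemma fa_add_assoc: "(a \<oplus> b) \<oplus> c = a \<oplus> (b \<oplus> c)"
  by (simp add: fa_add_def add.assoc)

lemma fa_sub_eq_add_smul: "a \<ominus> b = a \<oplus> (-1) \<cdot> b"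
  by (simp add: fa_add_def fa_sub_def fa_smul_def)

lemma fa_smul_mul_left: "(c \<cdot> a) \<otimes> b = c \<cdot> (a \<otimes> b)"
  by (simp add: fa_smul_def fa_mul_def fun_eq_iff sum_distrib_left mult.assoc)

lemma fa_smul_mul_right: "a \<otimes> (c \<cdot> b) = c \<cdot> (a \<otimes> b)"
  by (simp add: fa_smul_def fa_mul_def fun_eq_iff sum_distrib_left algebra_simps)

lemma fa_smul_add: "c \<cdot> (a \<oplus> b) = c \<cdot> a \<oplus> c \<cdot> b"
  by (simp add: fa_smul_def fa_add_def algebra_simps)

lemma fa_smul_smul: "c \<cdot> (d \<cdot> a) = (c * d) \<cdot> a"
  by (simp add: fa_smul_def mult.assoc)

lemma fa_smul_zero: "c \<cdot> fa_zero = fa_zero"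
  by (simp add: fa_smul_def)

lemma fa_const_eq_smul_one: "fa_const c = c \<cdot> fa_const 1"
  by (simp add: fa_const_def fa_smul_def fun_eq_iff)

text \<open>Of all splittings of a word only the one at position \<open>length u\<close> contributes.\<close>
lemma fa_mul_single_terms: "fa_of_terms [(a, u)] \<otimes> fa_of_terms [(b, v)] = fa_of_terms [(a * b, u @ v)]"
proof (rule ext)
  fix w
  have "(fa_of_terms [(a, u)] \<otimes> fa_of_terms [(b, v)]) w =
     (\<Sum>i\<le>length w. (if u = take i w then a else 0) * (if v = drop i w then b else 0))"
    by (simp add: fa_mul_def fa_of_terms_single)
  also have "\<dots> = (\<Sum>i\<le>length w. if i = length u then (if u @ v = w then a * b else 0) else 0)"
  proof (rule sum.cong[OF refl])
    fix i assume i: "i \<in> {..length w}"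
    show "(if u = take i w then a else 0) * (if v = drop i w then b else 0) =
          (if i = length u then (if u @ v = w then a * b else 0) else 0)"
    proof (cases "u = take i w \<and> v = drop i w")
      case True
      then have "u @ v = w" "length u = i"
        using i by (auto simp: min_def)
      with True show ?thesis by simp
    next
      case False
      then have "\<not> (i = length u \<and> u @ v = w)" by auto
      with False show ?thesis by auto
    qed
  qed
  also have "\<dots> = (if u @ v = w then a * b else 0)"
    by (auto simp: sum.delta)
  finally show "(fa_of_terms [(a, u)] \<otimes> fa_of_terms [(b, v)]) w = fa_of_terms [(a * b, u @ v)] w"
    by (simp add: fa_of_terms_single)
qed

lemma fa_mul_single_terms_list:
  "fa_of_terms [(a, u)] \<otimes> fa_of_terms us = fa_of_terms (map (\<lambda>(b, v). (a * b, u @ v)) us)"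
proof (induction us)
  case Nil
  then show ?case by (simp add: fa_of_terms_Nil fa_mul_zero_right)
next
  case (Cons t us)
  obtain b v where t: "t = (b, v)" by force
  have "fa_of_terms [(a, u)] \<otimes> fa_of_terms (t # us) =
      fa_of_terms [(a, u)] \<otimes> fa_of_terms [t] \<oplus> fa_of_terms [(a, u)] \<otimes> fa_of_terms us"
    by (subst fa_of_terms_Cons) (simp add: fa_mul_add_right)
  then show ?case
    by (simp add: t fa_mul_single_terms Cons flip: fa_of_terms_append)
qed

lemma fa_mul_terms: "fa_of_terms ts \<otimes> fa_of_terms us = fa_of_terms (terms_mul ts us)"
proof (induction ts)
  case Nil
  then show ?case by (simp add: fa_of_terms_Nil fa_mul_zero_left terms_mul_def)
next
  case (Cons t ts)
  obtain a u where t: "t = (a, u)" by force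
  have "fa_of_terms (t # ts) \<otimes> fa_of_terms us =
      fa_of_terms [(a, u)] \<otimes> fa_of_terms us \<oplus> fa_of_terms ts \<otimes> fa_of_terms us"
    by (subst fa_of_terms_Cons) (simp add: t fa_mul_add_left del: fa_of_terms_Cons)
  then show ?case
    by (simp add: fa_mul_single_terms_list Cons t terms_mul_def fa_of_terms_append)
qed

lemma fa_const_terms: "fa_const c = fa_of_terms [(c, [])]"
  by (auto simp: fa_const_def fa_of_terms_single)

lemma fa_gen_terms: "fa_gen g = fa_of_terms [(1, [g])]"
  by (auto simp: fa_gen_def fa_of_terms_single)

lemma terms_mul_Cons: "terms_mul ((a, u) # ts) us = map (\<lambda>(b, v). (a * b, u @ v)) us @ terms_mul ts us"
  by (simp add: terms_mul_def)

lemma terms_mul_Nil: "terms_mul [] us = []"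
  by (simp add: terms_mul_def)

lemma terms_mul_append: "terms_mul (ts @ us) vs = terms_mul ts vs @ terms_mul us vs"
  by (simp add: terms_mul_def)

lemma terms_mul_assoc: "terms_mul (terms_mul ts us) vs = terms_mul ts (terms_mul us vs)"
proof (induction ts)
  case Nil
  then show ?case by (simp add: terms_mul_Nil)
next
  case (Cons t ts)
  obtain a u where t: "t = (a, u)" by force
  have "terms_mul (map (\<lambda>(b, v). (a * b, u @ v)) us) vs
      = map (\<lambda>(b, v). (a * b, u @ v)) (terms_mul us vs)"
    by (induction us) (auto simp: terms_mul_def mult.assoc)
  then show ?case
    by (simp add: t terms_mul_Cons terms_mul_append Cons)
qed

lemma terms_mul_one_left: "terms_mul [(1, [])] ts = ts"
  by (induction ts) (auto simp: terms_mul_def)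

lemma terms_mul_one_right: "terms_mul ts [(1, [])] = ts"
  by (induction ts) (auto simp: terms_mul_def)

lemma fa_of_terms_support: "{w. fa_of_terms ts w \<noteq> 0} \<subseteq> snd ` set ts"
proof
  fix w
  assume "w \<in> {w. fa_of_terms ts w \<noteq> 0}"
  then have "filter (\<lambda>t. snd t = w) ts \<noteq> []"
    by (auto simp: fa_of_terms_def)
  then show "w \<in> snd ` set ts"
    by (force simp: filter_empty_conv)
qed

lemma fpoly_iff_terms: "fpoly p \<longleftrightarrow> (\<exists>ts. p = fa_of_terms ts)"
proof
  assume "fpoly p"
  then obtain l where l: "set l = {w. p w \<noteq> 0}" "distinct l"
    using finite_distinct_list unfolding fpoly_def by blast
  have "fa_of_terms (map (\<lambda>w. (p w, w)) l) w = (if w \<in> set l then p w else 0)" for w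
    using l(2) by (induction l) (auto simp: fa_of_terms_def)
  then have "p = fa_of_terms (map (\<lambda>w. (p w, w)) l)"
    using l(1) by auto
  then show "\<exists>ts. p = fa_of_terms ts" ..
next
  assume "\<exists>ts. p = fa_of_terms ts"
  then show "fpoly p"
    unfolding fpoly_def using fa_of_terms_support finite_subset by blast
qed

lemma fpoly_add: "fpoly a \<Longrightarrow> fpoly b \<Longrightarrow> fpoly (a \<oplus> b)"
  by (auto simp: fpoly_iff_terms simp flip: fa_of_terms_append)

lemma fpoly_mul: "fpoly a \<Longrightarrow> fpoly b \<Longrightarrow> fpoly (a \<otimes> b)"
  by (auto simp: fpoly_iff_terms fa_mul_terms)

lemma fpoly_smul: "fpoly a \<Longrightarrow> fpoly (c \<cdot> a)"
  by (auto simp: fpoly_iff_terms fa_smul_terms)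

lemma fpoly_sub: "fpoly a \<Longrightarrow> fpoly b \<Longrightarrow> fpoly (a \<ominus> b)"
  by (auto simp: fpoly_iff_terms fa_sub_terms)

lemma fpoly_gen: "fpoly (fa_gen g)"
  by (auto simp: fpoly_iff_terms fa_gen_terms)

lemma fpoly_const: "fpoly (fa_const c)"
  by (auto simp: fpoly_iff_terms fa_const_terms)

lemma fpoly_zero: "fpoly fa_zero"
  by (simp add: fpoly_def)

lemma fpoly_comm: "fpoly a \<Longrightarrow> fpoly b \<Longrightarrow> fpoly (fa_comm a b)"
  by (simp add: fa_comm_def fpoly_sub fpoly_mul)

lemma fpoly_fa_of_terms: "fpoly (fa_of_terms ts)"
  by (auto simp: fpoly_iff_terms)

lemmas fpoly_intros = fpoly_gen fpoly_const fpoly_add fpoly_sub fpoly_smul fpoly_mul fpoly_comm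

lemma fa_mul_assoc: "fpoly a \<Longrightarrow> fpoly b \<Longrightarrow> fpoly c \<Longrightarrow> (a \<otimes> b) \<otimes> c = a \<otimes> (b \<otimes> c)"
  by (auto simp: fpoly_iff_terms fa_mul_terms terms_mul_assoc)

lemma fa_mul_one_left: "fpoly a \<Longrightarrow> fa_const 1 \<otimes> a = a"
  by (auto simp: fpoly_iff_terms fa_const_terms fa_mul_terms terms_mul_one_left)

lemma fa_mul_one_right: "fpoly a \<Longrightarrow> a \<otimes> fa_const 1 = a"
  by (auto simp: fpoly_iff_terms fa_const_terms fa_mul_terms terms_mul_one_right)

lemma fa_const_mul: "fpoly a \<Longrightarrow> fa_const c \<otimes> a = c \<cdot> a"
  by (subst fa_const_eq_smul_one) (simp add: fa_smul_mul_left fa_mul_one_left)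

lemma fa_of_terms_eqI:
  assumes "list_all (\<lambda>w. fa_of_terms ts w = fa_of_terms us w) (remdups (map snd (ts @ us)))"
  shows "fa_of_terms ts = fa_of_terms us"
proof
  fix w
  show "fa_of_terms ts w = fa_of_terms us w"
  proof (cases "w \<in> set (map snd (ts @ us))")
    case True
    then show ?thesis using assms by (simp add: list_all_iff)
  next
    case False
    then have "filter (\<lambda>t. snd t = w) ts = []" "filter (\<lambda>t. snd t = w) us = []"
      by (auto simp: filter_empty_conv)
    then show ?thesis by (simp add: fa_of_terms_def)
  qed
qed

lemmas fa_to_terms = fa_gen_terms fa_const_terms fa_of_terms_append[symmetric]
  fa_smul_terms fa_sub_terms fa_mul_terms

section \<open>Ideals and commutators\<close>

lemma fpoly_fa_ideal:
  assumes "\<forall>r\<in>R. fpoly r"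
  shows "a \<in> fa_ideal R \<Longrightarrow> fpoly a"
  by (induction rule: fa_ideal.induct) (auto simp: fpoly_zero fpoly_add fpoly_mul assms)

lemma fa_ideal_smul: "\<forall>r\<in>R. fpoly r \<Longrightarrow> a \<in> fa_ideal R \<Longrightarrow> c \<cdot> a \<in> fa_ideal R"
  by (metis fa_const_mul fa_ideal.lmul fpoly_const fpoly_fa_ideal)

lemma fa_ideal_sub:
  "\<forall>r\<in>R. fpoly r \<Longrightarrow> a \<in> fa_ideal R \<Longrightarrow> b \<in> fa_ideal R \<Longrightarrow> a \<ominus> b \<in> fa_ideal R"
  by (simp add: fa_sub_eq_add_smul fa_ideal.add fa_ideal_smul)

lemma fa_comm_add_right: "fa_comm w (a \<oplus> b) = fa_comm w a \<oplus> fa_comm w b"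
  unfolding fa_comm_def fa_mul_add_left fa_mul_add_right by (simp add: fa_add_def fa_sub_def fun_eq_iff)

lemma fa_comm_smul_right: "fa_comm w (c \<cdot> a) = c \<cdot> fa_comm w a"
  unfolding fa_comm_def fa_smul_mul_left fa_smul_mul_right by (simp add: fa_smul_def fa_sub_def algebra_simps)

lemma fa_comm_smul_left: "fa_comm (c \<cdot> w) a = c \<cdot> fa_comm w a"
  unfolding fa_comm_def fa_smul_mul_left fa_smul_mul_right by (simp add: fa_smul_def fa_sub_def algebra_simps)

lemma fa_comm_mul_right:
  "fpoly w \<Longrightarrow> fpoly a \<Longrightarrow> fpoly b \<Longrightarrow> fa_comm w (a \<otimes> b) = fa_comm w a \<otimes> b \<oplus> a \<otimes> fa_comm w b"
  unfolding fa_comm_def fa_mul_sub_left fa_mul_sub_right by (simp add: fa_mul_assoc fa_add_def fa_sub_def)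

lemma fa_comm_zero_right: "fa_comm w fa_zero = fa_zero"
  by (simp add: fa_comm_def fa_mul_zero_left fa_mul_zero_right fa_sub_def)

lemma fa_comm_self: "fa_comm w w = fa_zero"
  by (simp add: fa_comm_def fa_sub_def)

lemma fa_comm_swap: "fa_comm a b = (-1) \<cdot> fa_comm b a"
  by (simp add: fa_comm_def fa_sub_def fa_smul_def)

text \<open>The commutator with \<open>w\<close> is a derivation, so it suffices to check generators.\<close>
lemma fa_comm_in_ideal_from_gens:
  assumes R: "\<forall>r\<in>R. fpoly r" and w: "fpoly w"
    and gens: "\<And>g. fa_comm w (fa_gen g) \<in> fa_ideal R" and p: "fpoly p"
  shows "fa_comm w p \<in> fa_ideal R"
proof -
  have monomial: "fa_comm w (fa_of_terms [(1, u)]) \<in> fa_ideal R" for u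
  proof (induction u)
    case Nil
    have "fa_comm w (fa_of_terms [(1, [])]) = fa_zero"
      using w by (simp add: fa_const_terms[symmetric] fa_comm_def fa_mul_one_left fa_mul_one_right fa_sub_def)
    then show ?case by (simp add: fa_ideal.zero)
  next
    case (Cons g u)
    have split: "fa_of_terms [(1, g # u)] = fa_gen g \<otimes> fa_of_terms [(1, u)]"
      by (simp add: fa_gen_terms fa_mul_single_terms)
    show ?case
      unfolding split fa_comm_mul_right[OF w fpoly_gen fpoly_fa_of_terms]
      by (metis fa_ideal.add fa_ideal.rmul fa_ideal.lmul gens Cons fpoly_gen fpoly_fa_of_terms)
  qed
  have "fa_comm w (fa_of_terms ts) \<in> fa_ideal R" for ts
  proof (induction ts)
    case Nil
    then show ?case by (simp add: fa_of_terms_Nil fa_comm_zero_right fa_ideal.zero)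
  next
    case (Cons t ts)
    obtain a u where t: "t = (a, u)" by force
    have "fa_of_terms [(a, u)] = a \<cdot> fa_of_terms [(1, u)]"
      by (simp add: fa_smul_terms terms_smult_def)
    then show ?case
      by (subst fa_of_terms_Cons)
        (simp add: t fa_comm_add_right fa_comm_smul_right fa_ideal.add fa_ideal_smul[OF R] monomial Cons
          del: fa_of_terms_Cons)
  qed
  then show ?thesis
    using p by (auto simp: fpoly_iff_terms)
qed

section \<open>Homomorphisms between free algebras\<close>

definition terms_hom :: "('g \<Rightarrow> ('h, 'k::field) fa) \<Rightarrow> ('k \<times> 'g list) list \<Rightarrow> ('h, 'k) fa" where
  "terms_hom \<phi> ts = foldr (\<lambda>(a, u) acc. a \<cdot> fa_word \<phi> u \<oplus> acc) ts fa_zero"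

lemma terms_hom_Nil: "terms_hom \<phi> [] = fa_zero"
  by (simp add: terms_hom_def)

lemma terms_hom_Cons: "terms_hom \<phi> ((a, u) # ts) = a \<cdot> fa_word \<phi> u \<oplus> terms_hom \<phi> ts"
  by (simp add: terms_hom_def)

lemma sum_fa_of_terms:
  assumes "finite S" and "snd ` set ts \<subseteq> S"
  shows "(\<Sum>w\<in>S. fa_of_terms ts w * f w) = sum_list (map (\<lambda>(a, u). a * f u) ts)"
  using assms(2)
proof (induction ts)
  case Nil
  then show ?case by (simp add: fa_of_terms_def)
next
  case (Cons t ts)
  obtain a u where t: "t = (a, u)" by force
  have "fa_of_terms (t # ts) w * f w = (if u = w then a * f w else 0) + fa_of_terms ts w * f w" for w
    by (simp add: fa_of_terms_def t distrib_right)
  then show ?case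
    using Cons assms(1) by (simp add: t sum.distrib sum.delta)
qed

lemma fa_hom_terms: "fa_hom \<phi> (fa_of_terms ts) = terms_hom \<phi> ts"
proof
  fix v
  have "fa_hom \<phi> (fa_of_terms ts) v = (\<Sum>w\<in>snd ` set ts. fa_of_terms ts w * fa_word \<phi> w v)"
    unfolding fa_hom_def using fa_of_terms_support by (intro sum.mono_neutral_left) auto
  also have "\<dots> = terms_hom \<phi> ts v"
    by (simp add: sum_fa_of_terms) (induction ts, auto simp: terms_hom_def fa_add_def fa_smul_def)
  finally show "fa_hom \<phi> (fa_of_terms ts) v = terms_hom \<phi> ts v" .
qed

context
  fixes \<phi> :: "'g \<Rightarrow> ('h, 'k::field) fa"
  assumes fpoly_\<phi>: "\<And>g. fpoly (\<phi> g)"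
begin

lemma fpoly_fa_word: "fpoly (fa_word \<phi> u)"
  by (induction u) (auto simp: fpoly_const fpoly_mul fpoly_\<phi>)

lemma fa_word_append: "fa_word \<phi> (u @ v) = fa_word \<phi> u \<otimes> fa_word \<phi> v"
  by (induction u) (auto simp: fa_mul_one_left fpoly_fa_word fa_mul_assoc fpoly_\<phi>)

lemma fpoly_terms_hom: "fpoly (terms_hom \<phi> ts)"
  by (induction ts) (auto simp: terms_hom_def fpoly_zero fpoly_add fpoly_smul fpoly_fa_word)

lemma terms_hom_append: "terms_hom \<phi> (ts @ us) = terms_hom \<phi> ts \<oplus> terms_hom \<phi> us"
  by (induction ts) (auto simp: terms_hom_def fa_add_zero_left fa_add_assoc)

lemma terms_hom_smult: "terms_hom \<phi> (terms_smult c ts) = c \<cdot> terms_hom \<phi> ts"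
  by (induction ts) (auto simp: terms_hom_def terms_smult_def fa_smul_zero fa_smul_add fa_smul_smul)

lemma terms_hom_mul: "terms_hom \<phi> (terms_mul ts us) = terms_hom \<phi> ts \<otimes> terms_hom \<phi> us"
proof (induction ts)
  case Nil
  then show ?case by (simp add: terms_hom_Nil terms_mul_Nil fa_mul_zero_left)
next
  case (Cons t ts)
  obtain a u where t: "t = (a, u)" by force
  have "terms_hom \<phi> (map (\<lambda>(b, v). (a * b, u @ v)) us) = (a \<cdot> fa_word \<phi> u) \<otimes> terms_hom \<phi> us"
    by (induction us)
      (auto simp: terms_hom_Nil fa_mul_zero_right terms_hom_Cons fa_mul_add_right fa_smul_mul_left
        fa_smul_mul_right fa_smul_smul fa_smul_add fa_word_append mult.commute)
  then show ?case
    by (simp add: t terms_mul_Cons terms_hom_append Cons terms_hom_Cons fa_mul_add_left)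
qed

lemma fa_hom_add: "fpoly a \<Longrightarrow> fpoly b \<Longrightarrow> fa_hom \<phi> (a \<oplus> b) = fa_hom \<phi> a \<oplus> fa_hom \<phi> b"
  by (auto simp: fpoly_iff_terms fa_hom_terms terms_hom_append simp flip: fa_of_terms_append)

lemma fa_hom_smul: "fpoly a \<Longrightarrow> fa_hom \<phi> (c \<cdot> a) = c \<cdot> fa_hom \<phi> a"
  by (auto simp: fpoly_iff_terms fa_smul_terms fa_hom_terms terms_hom_smult)

lemma fa_hom_mul: "fpoly a \<Longrightarrow> fpoly b \<Longrightarrow> fa_hom \<phi> (a \<otimes> b) = fa_hom \<phi> a \<otimes> fa_hom \<phi> b"
  by (auto simp: fpoly_iff_terms fa_mul_terms fa_hom_terms terms_hom_mul)

lemma fa_hom_sub: "fpoly a \<Longrightarrow> fpoly b \<Longrightarrow> fa_hom \<phi> (a \<ominus> b) = fa_hom \<phi> a \<ominus> fa_hom \<phi> b"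
  by (simp add: fa_sub_eq_add_smul fa_hom_add fa_hom_smul fpoly_smul)

lemma fa_hom_gen: "fa_hom \<phi> (fa_gen g) = \<phi> g"
  by (simp add: fa_gen_terms fa_hom_terms terms_hom_Cons terms_hom_Nil fa_add_zero_right
      fa_mul_one_right fpoly_\<phi> fa_smul_def)

lemma fa_hom_const: "fa_hom \<phi> (fa_const c) = fa_const c"
  unfolding fa_const_terms fa_hom_terms
  by (simp add: terms_hom_Cons terms_hom_Nil fa_add_zero_right fa_smul_def fa_of_terms_single
      fa_const_def fun_eq_iff)

lemma fa_hom_zero: "fa_hom \<phi> fa_zero = fa_zero"
  by (simp add: fa_hom_def)

lemma fa_hom_comm: "fpoly a \<Longrightarrow> fpoly b \<Longrightarrow> fa_hom \<phi> (fa_comm a b) = fa_comm (fa_hom \<phi> a) (fa_hom \<phi> b)"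
  by (simp add: fa_comm_def fa_hom_sub fa_hom_mul fpoly_mul)

lemma fpoly_fa_hom: "fpoly a \<Longrightarrow> fpoly (fa_hom \<phi> a)"
  using fpoly_terms_hom by (auto simp: fpoly_iff_terms fa_hom_terms)

lemma fa_hom_ideal:
  assumes R: "\<forall>r\<in>R. fpoly r"
    and rels: "\<And>r. r \<in> R \<Longrightarrow> fa_hom \<phi> r \<in> fa_ideal S"
  shows "p \<in> fa_ideal R \<Longrightarrow> fa_hom \<phi> p \<in> fa_ideal S"
proof (induction rule: fa_ideal.induct)
  case zero
  then show ?case by (simp add: fa_hom_zero fa_ideal.zero)
next
  case (gen r)
  then show ?case by (rule rels)
next
  case (add a b)
  then show ?case by (simp add: fa_hom_add fpoly_fa_ideal[OF R] fa_ideal.add)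
next
  case (lmul a p)
  then show ?case by (simp add: fa_hom_mul fpoly_fa_ideal[OF R] fa_ideal.lmul fpoly_fa_hom)
next
  case (rmul a p)
  then show ?case by (simp add: fa_hom_mul fpoly_fa_ideal[OF R] fa_ideal.rmul fpoly_fa_hom)
qed

end

lemma fa_hom_fa_gen: "fpoly p \<Longrightarrow> fa_hom fa_gen p = p"
proof -
  have word: "fa_word fa_gen u = fa_of_terms [(1, u)]" for u :: "'a list"
    by (induction u) (auto simp: fa_const_terms fa_gen_terms fa_mul_terms terms_mul_def)
  have "terms_hom fa_gen ts = fa_of_terms ts" for ts :: "('b::field \<times> 'a list) list"
  proof (induction ts)
    case Nil
    then show ?case by (simp add: terms_hom_Nil fa_of_terms_Nil)
  next
    case (Cons t ts)
    obtain a u where t: "t = (a, u)" by force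
    show ?case
      by (subst fa_of_terms_Cons)
        (simp add: t terms_hom_Cons word Cons fa_smul_terms terms_smult_def del: fa_of_terms_Cons)
  qed
  then show "fpoly p \<Longrightarrow> fa_hom fa_gen p = p"
    by (auto simp: fpoly_iff_terms fa_hom_terms)
qed

lemma fa_hom_inverse:
  assumes fpoly_\<phi>: "\<And>g. fpoly (\<phi> g)" and fpoly_\<psi>: "\<And>g. fpoly (\<psi> g)"
    and inverse_gen: "\<And>g. fa_hom \<psi> (\<phi> g) = fa_gen g" and p: "fpoly p"
  shows "fa_hom \<psi> (fa_hom \<phi> p) = p"
proof -
  obtain ts where p_ts: "p = fa_of_terms ts"
    using p by (auto simp: fpoly_iff_terms)
  have word: "fa_hom \<psi> (fa_word \<phi> u) = fa_word fa_gen u" for u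
    by (induction u)
      (auto simp: fa_hom_const[OF fpoly_\<psi>] fa_hom_mul[OF fpoly_\<psi>] fpoly_fa_word[OF fpoly_\<phi>] fpoly_\<phi> inverse_gen)
  have "fa_hom \<psi> (terms_hom \<phi> ts) = terms_hom fa_gen ts"
    by (induction ts)
      (auto simp: terms_hom_Nil terms_hom_Cons fa_hom_zero[OF fpoly_\<psi>] fa_hom_add[OF fpoly_\<psi>]
        fa_hom_smul[OF fpoly_\<psi>] fpoly_smul fpoly_fa_word[OF fpoly_\<phi>] fpoly_terms_hom[OF fpoly_\<phi>] word)
  then show ?thesis
    using fa_hom_fa_gen[OF p] by (simp add: p_ts fa_hom_terms)
qed

lemma fa_presentations_iso:
  fixes \<phi> :: "'g \<Rightarrow> ('h, 'k::field) fa" and \<psi> :: "'h \<Rightarrow> ('g, 'k) fa"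
  assumes fpoly_\<phi>: "\<And>g. fpoly (\<phi> g)" and fpoly_\<psi>: "\<And>g. fpoly (\<psi> g)"
    and R: "\<forall>r\<in>R. fpoly r" and S: "\<forall>s\<in>S. fpoly s"
    and \<phi>_rels: "\<And>r. r \<in> R \<Longrightarrow> fa_hom \<phi> r \<in> fa_ideal S"
    and \<psi>_rels: "\<And>s. s \<in> S \<Longrightarrow> fa_hom \<psi> s \<in> fa_ideal R"
    and \<psi>_\<phi>: "\<And>g. fa_hom \<psi> (\<phi> g) = fa_gen g"
    and \<phi>_\<psi>: "\<And>g. fa_hom \<phi> (\<psi> g) = fa_gen g"
  shows "(\<forall>p. fpoly p \<longrightarrow> (p \<in> fa_ideal R \<longleftrightarrow> fa_hom \<phi> p \<in> fa_ideal S))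
       \<and> (\<forall>d. fpoly d \<longrightarrow> (\<exists>p. fpoly p \<and> d \<ominus> fa_hom \<phi> p \<in> fa_ideal S))"
proof (intro conjI allI impI)
  fix p :: "('g, 'k) fa"
  assume p: "fpoly p"
  show "p \<in> fa_ideal R \<longleftrightarrow> fa_hom \<phi> p \<in> fa_ideal S"
  proof
    show "p \<in> fa_ideal R \<Longrightarrow> fa_hom \<phi> p \<in> fa_ideal S"
      using fa_hom_ideal[OF fpoly_\<phi> R \<phi>_rels] .
    assume "fa_hom \<phi> p \<in> fa_ideal S"
    then have "fa_hom \<psi> (fa_hom \<phi> p) \<in> fa_ideal R"
      using fa_hom_ideal[OF fpoly_\<psi> S \<psi>_rels] by blast
    then show "p \<in> fa_ideal R"
      by (simp add: fa_hom_inverse[OF fpoly_\<phi> fpoly_\<psi> \<psi>_\<phi> p])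
  qed
next
  fix d :: "('h, 'k) fa"
  assume d: "fpoly d"
  show "\<exists>p. fpoly p \<and> d \<ominus> fa_hom \<phi> p \<in> fa_ideal S"
  proof (intro exI conjI)
    show "fpoly (fa_hom \<psi> d)"
      using fpoly_fa_hom[of \<psi>, OF fpoly_\<psi> d] .
    have "d \<ominus> fa_hom \<phi> (fa_hom \<psi> d) = fa_zero"
      by (simp add: fa_hom_inverse[OF fpoly_\<psi> fpoly_\<phi> \<phi>_\<psi> d] fa_sub_def)
    then show "d \<ominus> fa_hom \<phi> (fa_hom \<psi> d) \<in> fa_ideal S"
      by (simp add: fa_ideal.zero)
  qed
qed

text \<open>The image of C solves the defining equation of \<open>gammaD\<close> for C, with lambda in place of gamma.\<close>
definition psi :: "'k::field \<Rightarrow> gD \<Rightarrow> (gO, 'k) fa" where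
  "psi q g = (case g of GA \<Rightarrow> X | GB \<Rightarrow> Y | GC \<Rightarrow>
     inverse (q + inverse q) \<cdot> L \<ominus> inverse (q^2 - inverse q ^ 2) \<cdot> (q \<cdot> (X \<otimes> Y) \<ominus> inverse q \<cdot> (Y \<otimes> X)))"

lemma psi_simps:
  "psi q GA = X" "psi q GB = Y"
  "psi q GC = inverse (q + inverse q) \<cdot> L \<ominus> inverse (q^2 - inverse q ^ 2) \<cdot> (q \<cdot> (X \<otimes> Y) \<ominus> inverse q \<cdot> (Y \<otimes> X))"
  by (simp_all add: psi_def)

lemma phi_simps: "phi q GX = A" "phi q GY = B" "phi q GL = gammaD q"
  by (simp_all add: phi_def)

lemma fpoly_psi: "fpoly (psi q g)"
  by (simp add: psi_def fpoly_intros split: gD.split)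

lemma fpoly_phi: "fpoly (phi q g)"
  by (simp add: phi_def gammaD_def omegaC_def fpoly_intros split: gO.split)

lemma fpoly_omega: "fpoly (omegaA q)" "fpoly (omegaB q)" "fpoly (omegaC q)"
  by (simp_all add: omegaA_def omegaB_def omegaC_def fpoly_intros)

lemma fpoly_rels_Delta: "\<forall>r\<in>rels_Delta q. fpoly r"
  by (auto simp: rels_Delta_def fpoly_omega fpoly_intros)

lemma fpoly_rels_OJ: "\<forall>r\<in>rels_OJ q. fpoly r"
  by (auto simp: rels_OJ_def relO1_def relO2_def Jgen_def xi1_def xi2_def fpoly_intros)

lemmas fa_hom_psi_phi_simps =
  fa_hom_add[OF fpoly_psi] fa_hom_sub[OF fpoly_psi] fa_hom_smul[OF fpoly_psi]
  fa_hom_mul[OF fpoly_psi] fa_hom_gen[OF fpoly_psi]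
  fa_hom_add[OF fpoly_phi] fa_hom_sub[OF fpoly_phi] fa_hom_smul[OF fpoly_phi]
  fa_hom_mul[OF fpoly_phi] fa_hom_gen[OF fpoly_phi]

lemmas presentation_defs = omegaA_def omegaB_def omegaC_def gammaD_def
  relO1_def relO2_def qbr3_def Jgen_def xi1_def xi2_def fa_comm_def

lemma q_square_diff_nonzero:
  fixes q :: "'k::field"
  assumes "q \<noteq> 0" and "q ^ 4 \<noteq> 1"
  shows "q^2 - inverse q ^ 2 \<noteq> 0"
proof
  assume "q^2 - inverse q ^ 2 = 0"
  then have "q^2 * (q^2 - inverse q ^ 2) = 0" by simp
  then have "q^4 - 1 = 0"
    using assms(1) by (simp add: algebra_simps power2_eq_square power4_eq_xxxx field_simps)
  with assms(2) show False by simp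
qed

lemma q_plus_inverse_nonzero:
  fixes q :: "'k::field"
  assumes "q \<noteq> 0" and "q ^ 4 \<noteq> 1"
  shows "q + inverse q \<noteq> 0"
proof -
  have "q^2 - inverse q ^ 2 = (q + inverse q) * (q - inverse q)"
    by (simp add: power2_eq_square algebra_simps)
  with q_square_diff_nonzero[OF assms] show ?thesis by auto
qed

lemma rels_OJ_in_ideal:
  "relO1 q \<in> fa_ideal (rels_OJ q)" "relO2 q \<in> fa_ideal (rels_OJ q)" "Jgen q \<in> fa_ideal (rels_OJ q)"
  "fa_comm L X \<in> fa_ideal (rels_OJ q)" "fa_comm L Y \<in> fa_ideal (rels_OJ q)"
  by (auto intro: fa_ideal.gen simp: rels_OJ_def)

lemma rels_Delta_in_ideal:
  "w \<in> {omegaA, omegaB, omegaC} \<Longrightarrow> fa_comm (w q) (fa_gen g) \<in> fa_ideal (rels_Delta q)"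
  by (auto intro!: fa_ideal.gen simp: rels_Delta_def)

lemma fa_comm_L_in_ideal: "fpoly p \<Longrightarrow> fa_comm L p \<in> fa_ideal (rels_OJ q)"
proof (rule fa_comm_in_ideal_from_gens[OF fpoly_rels_OJ fpoly_gen])
  show "fa_comm L (fa_gen g) \<in> fa_ideal (rels_OJ q)" for g
    by (cases g) (auto simp: rels_OJ_in_ideal fa_comm_self fa_ideal.zero)
qed

lemma fa_comm_omegaC_in_ideal: "fpoly p \<Longrightarrow> fa_comm (omegaC q) p \<in> fa_ideal (rels_Delta q)"
  by (rule fa_comm_in_ideal_from_gens[OF fpoly_rels_Delta fpoly_omega(3)]) (simp add: rels_Delta_in_ideal)

lemmas fa_ideal_closure = fa_ideal.add fa_ideal.lmul fa_ideal.rmul fpoly_intros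
  fa_ideal_smul[OF fpoly_rels_OJ] fa_ideal_sub[OF fpoly_rels_OJ]
  fa_ideal_smul[OF fpoly_rels_Delta] fa_ideal_sub[OF fpoly_rels_Delta]

context
  fixes q :: "'k::field"
  assumes q_nonzero: "q \<noteq> 0" and q4: "q ^ 4 \<noteq> 1"
begin

lemma q_units:
  "q * inverse q = 1" "(q^2 - inverse q ^ 2) * inverse (q^2 - inverse q ^ 2) = 1"
  "(q + inverse q) * inverse (q + inverse q) = 1"
  using q_nonzero q_square_diff_nonzero[OF q_nonzero q4] q_plus_inverse_nonzero[OF q_nonzero q4]
  by simp_all

text \<open>The identities below are checked by rewriting both sides into term lists and comparing the
  coefficients of all words that occur; these are rational expressions in q, closed by \<open>algebra\<close>
  modulo \<open>q_units\<close>.\<close>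
lemma psi_gammaD_and_phi_psi_GC:
  "fa_hom (psi q) (gammaD q) = L"
  "fa_hom (phi q) (psi q GC) = C"
  by (simp only: presentation_defs fa_hom_psi_phi_simps psi_simps phi_simps fpoly_intros simp_thms,
      simp only: fa_to_terms, rule fa_of_terms_eqI,
      (simp add: fa_of_terms_def terms_mul_def terms_smult_def q_units;
        ((intro conjI)?; (algebra | use q_units in algebra))))+

lemma psi_omega_comm_gens:
  "fa_comm (fa_hom (psi q) (omegaA q)) X =
     (- (inverse (q^2 - inverse q ^ 2) ^ 2)) \<cdot> Jgen q
     \<oplus> (- (inverse (q + inverse q) ^ 2)) \<cdot> fa_comm L xi1
     \<oplus> (inverse (q + inverse q) ^ 2) \<cdot> (fa_comm L X \<otimes> Y)
     \<oplus> (- (q * inverse (q^2 - inverse q ^ 2) * inverse (q + inverse q))) \<cdot> (fa_comm L Y \<otimes> X \<ominus> X \<otimes> fa_comm L Y)"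
  "fa_comm (fa_hom (psi q) (omegaA q)) Y =
     (- (inverse (q^2 - inverse q ^ 2) ^ 2)) \<cdot> relO2 q
     \<oplus> (inverse (q + inverse q) ^ 2) \<cdot> (fa_comm L Y \<otimes> Y)
     \<oplus> (- (q * inverse (q^2 - inverse q ^ 2) * inverse (q + inverse q))) \<cdot> (fa_comm L Y \<otimes> Y \<ominus> Y \<otimes> fa_comm L Y)"
  "fa_comm (fa_hom (psi q) (omegaB q)) X =
     (- (inverse (q^2 - inverse q ^ 2) ^ 2)) \<cdot> relO1 q
     \<oplus> (inverse (q + inverse q) ^ 2) \<cdot> (fa_comm L X \<otimes> X)
     \<oplus> (inverse q * inverse (q^2 - inverse q ^ 2) * inverse (q + inverse q)) \<cdot> (fa_comm L X \<otimes> X \<ominus> X \<otimes> fa_comm L X)"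
  "fa_comm (fa_hom (psi q) (omegaB q)) Y =
     (inverse (q^2 - inverse q ^ 2) ^ 2) \<cdot> Jgen q
     \<oplus> (inverse (q + inverse q) ^ 2) \<cdot> fa_comm L xi1
     \<oplus> (inverse (q + inverse q) ^ 2) \<cdot> (fa_comm L Y \<otimes> X)
     \<oplus> (inverse q * inverse (q^2 - inverse q ^ 2) * inverse (q + inverse q)) \<cdot> (fa_comm L X \<otimes> Y \<ominus> Y \<otimes> fa_comm L X)"
  by (simp only: presentation_defs fa_hom_psi_phi_simps psi_simps phi_simps fpoly_intros simp_thms,
      simp only: fa_to_terms, rule fa_of_terms_eqI,
      (simp add: fa_of_terms_def terms_mul_def terms_smult_def q_units;
        ((intro conjI)?; (algebra | use q_units in algebra))))+

lemma phi_rels_O: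
  "fa_hom (phi q) (relO1 q) =
     (- ((q^2 - inverse q ^ 2) ^ 2)) \<cdot> fa_comm (omegaB q) A
     \<oplus> ((q^2 - inverse q ^ 2) ^ 2 * inverse (q + inverse q)) \<cdot> (fa_comm (omegaC q) A \<otimes> A)
     \<oplus> (inverse q * (q^2 - inverse q ^ 2)) \<cdot> (fa_comm (omegaC q) A \<otimes> A \<ominus> A \<otimes> fa_comm (omegaC q) A)"
  "fa_hom (phi q) (relO2 q) =
     (- ((q^2 - inverse q ^ 2) ^ 2)) \<cdot> fa_comm (omegaA q) B
     \<oplus> ((q^2 - inverse q ^ 2) ^ 2 * inverse (q + inverse q)) \<cdot> (fa_comm (omegaC q) B \<otimes> B)
     \<oplus> (- (q * (q^2 - inverse q ^ 2))) \<cdot> (fa_comm (omegaC q) B \<otimes> B \<ominus> B \<otimes> fa_comm (omegaC q) B)"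
  "fa_hom (phi q) (Jgen q) =
     (- ((q^2 - inverse q ^ 2) ^ 2)) \<cdot>
       (fa_comm (omegaA q) A
        \<oplus> inverse (q + inverse q) \<cdot> fa_comm (omegaC q) (A \<otimes> B \<ominus> B \<otimes> A)
        \<oplus> (- inverse (q + inverse q)) \<cdot> (fa_comm (omegaC q) A \<otimes> B)
        \<oplus> (q * inverse (q^2 - inverse q ^ 2)) \<cdot> (fa_comm (omegaC q) B \<otimes> A \<ominus> A \<otimes> fa_comm (omegaC q) B))"
  by (simp only: presentation_defs fa_hom_psi_phi_simps psi_simps phi_simps fpoly_intros simp_thms,
      simp only: fa_to_terms, rule fa_of_terms_eqI,
      (simp add: fa_of_terms_def terms_mul_def terms_smult_def q_units;
        ((intro conjI)?; (algebra | use q_units in algebra))))+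

lemma psi_omegaC: "fa_hom (psi q) (omegaC q) = inverse (q + inverse q) \<cdot> L"
proof -
  have "fa_hom (psi q) (omegaC q)
      = (inverse (q + inverse q) * (q + inverse q)) \<cdot> fa_hom (psi q) (omegaC q)"
    using q_plus_inverse_nonzero[OF q_nonzero q4] by (simp add: fa_smul_def)
  also have "\<dots> = inverse (q + inverse q) \<cdot> fa_hom (psi q) (gammaD q)"
    by (simp add: gammaD_def fa_hom_smul[OF fpoly_psi] fpoly_omega fa_smul_smul)
  also have "\<dots> = inverse (q + inverse q) \<cdot> L"
    by (simp add: psi_gammaD_and_phi_psi_GC(1))
  finally show ?thesis .
qed

lemma psi_omega_central:
  assumes "w \<in> {omegaA, omegaB, omegaC}" and p: "fpoly p"
  shows "fa_comm (fa_hom (psi q) (w q)) p \<in> fa_ideal (rels_OJ q)"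
proof -
  consider "w = omegaC" | "w \<in> {omegaA, omegaB}"
    using assms(1) by blast
  then show ?thesis
  proof cases
    case 1
    then show ?thesis
      using p by (simp add: psi_omegaC fa_comm_smul_left fa_comm_L_in_ideal fa_ideal_closure)
  next
    case 2
    have fpoly_w: "fpoly (fa_hom (psi q) (w q))"
      using 2 by (auto intro: fpoly_fa_hom[of "psi q", OF fpoly_psi] simp: fpoly_omega)
    have "fa_comm (fa_hom (psi q) (w q)) (fa_gen g) \<in> fa_ideal (rels_OJ q)" for g
    proof (cases g)
      case GL
      then show ?thesis
        by (subst fa_comm_swap) (simp add: fpoly_w fa_ideal_closure fa_comm_L_in_ideal)
    qed (use 2 in \<open>auto simp: psi_omega_comm_gens rels_OJ_in_ideal fa_comm_L_in_ideal xi1_def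
        fa_ideal_closure\<close>)
    then show ?thesis
      using fa_comm_in_ideal_from_gens[OF fpoly_rels_OJ fpoly_w _ p] by blast
  qed
qed

lemma psi_rels_Delta: "r \<in> rels_Delta q \<Longrightarrow> fa_hom (psi q) r \<in> fa_ideal (rels_OJ q)"
  unfolding rels_Delta_def
  by (auto simp: fa_hom_comm[OF fpoly_psi] fa_hom_gen[OF fpoly_psi] fpoly_omega fpoly_gen fpoly_psi
      psi_omega_central)

lemma phi_rels_OJ: "r \<in> rels_OJ q \<Longrightarrow> fa_hom (phi q) r \<in> fa_ideal (rels_Delta q)"
  unfolding rels_OJ_def
  by (auto simp: phi_rels_O fa_hom_comm[OF fpoly_phi] fa_hom_gen[OF fpoly_phi] fpoly_gen phi_simps
      gammaD_def fa_comm_smul_left fa_comm_omegaC_in_ideal rels_Delta_in_ideal fa_ideal_closure)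

lemma psi_phi_gen: "fa_hom (psi q) (phi q g) = fa_gen g"
  by (cases g) (simp_all add: phi_simps psi_simps fa_hom_gen[OF fpoly_psi] psi_gammaD_and_phi_psi_GC)

lemma phi_psi_gen: "fa_hom (phi q) (psi q g) = fa_gen g"
  by (cases g) (simp_all add: psi_simps(1,2) phi_simps fa_hom_gen[OF fpoly_phi] psi_gammaD_and_phi_psi_GC)

end

theorem theorem10p3:
  fixes q :: "'k::field"
  assumes "q \<noteq> 0" and "q ^ 4 \<noteq> 1"
  shows "(\<forall>p. fpoly p \<longrightarrow>
            (p \<in> fa_ideal (rels_OJ q) \<longleftrightarrow> fa_hom (phi q) p \<in> fa_ideal (rels_Delta q)))
       \<and> (\<forall>d. fpoly d \<longrightarrow>
            (\<exists>p. fpoly p \<and> d \<ominus> fa_hom (phi q) p \<in> fa_ideal (rels_Delta q)))"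
proof (rule fa_presentations_iso[of "phi q" "psi q"])
  show "r \<in> rels_OJ q \<Longrightarrow> fa_hom (phi q) r \<in> fa_ideal (rels_Delta q)" for r
    using phi_rels_OJ[OF assms] .
  show "s \<in> rels_Delta q \<Longrightarrow> fa_hom (psi q) s \<in> fa_ideal (rels_OJ q)" for s
    using psi_rels_Delta[OF assms] .
  show "fa_hom (psi q) (phi q g) = fa_gen g" "fa_hom (phi q) (psi q h) = fa_gen h" for g h
    using psi_phi_gen[OF assms] phi_psi_gen[OF assms] .
qed (simp_all add: fpoly_phi fpoly_psi fpoly_rels_OJ fpoly_rels_Delta)

end
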